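(* Let $\xi_1,\xi_2,\ldots$ be i.i.d.\ nonnegative real random variables with $\overline F(x):=\P(\xi_1\geq x)=x^{-1}\ell(x)$ for $x\to\infty$, where $\ell$ is slowly varying. Let $G(x):=\int_0^x\overline F(t)\,dt$ and $S_k:=\sum_{i=1}^k\xi_i$. Let $(x_n)_{n\geq1}$ be a positive sequence with $\liminf_{n\to\infty}\frac{x_n}{nG(x_n)}>0$ and let $(a_n)_{n\geq1}$ be a positive sequence with $\lim_{n\to\infty}a_n\in(0,\infty)$. Then, as $n\to\infty$, $$\max_{1\leq k\leq n}\P(S_k-kG(x_n)\geq a_nx_n)=O(n\overline F(x_n)).$$
   Context: A function $\ell$ is slowly varying if $\ell(\lambda x)/\ell(x)\to1$ as $x\to\infty$ for every $\lambda>0$. *)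

theory Defs
  imports "HOL-Probability.Probability" "HOL-Library.Landau_Symbols"
begin

definition slowly_varying :: "(real \<Rightarrow> real) \<Rightarrow> bool" where
  "slowly_varying l \<longleftrightarrow>
     (\<forall>lam::real. lam > 0 \<longrightarrow> ((\<lambda>x. l (lam * x) / l x) \<longlongrightarrow> 1) at_top)"

end

(*
  Truncate at level y = x n. If S k - k G(y) \<ge> b y, then either some \<xi> i with i < k is at
  least y, which has probability at most k Fbar(y), or the centred sum of the truncated
  variables deviates by at least b y, because E[\<xi> 1{\<xi> < y}] \<le> G(y); by Chebyshev the latter
  has probability at most k E[\<xi>^2 1{\<xi> < y}] / (b y)^2. Slow variation gives the doubling
  bound Fbar(t/2) \<le> 3 Fbar(t) for large t, and splitting [0, y) into dyadic shells turns it
  into E[\<xi>^2 1{\<xi> < y}] = O(y^2 Fbar(y)). Finally x n \<rightarrow> \<infinity>: Fbar is positive and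
  G(x) \<ge> x Fbar(x), so bounded x n would make x n / (n G(x n)) tend to 0.
*)
theory Submission
  imports Defs
begin

section \<open>Antitone functions, dyadic sums and slow variation\<close>

lemma antimono_integrable_on:
  fixes F :: "real \<Rightarrow> real"
  assumes "antimono F"
  shows "F integrable_on {a..b}"
proof -
  have "mono_on {a..b} (\<lambda>t. - F t)"
    using assms by (auto simp: mono_on_def antimono_def)
  then have "(\<lambda>t. - (- F t)) integrable_on {a..b}"
    by (intro integrable_neg integrable_on_mono_on)
  then show ?thesis by simp
qed

lemma mult_le_integral_antimono:
  fixes F :: "real \<Rightarrow> real"
  assumes "antimono F" and "0 \<le> x"
  shows "x * F x \<le> integral {0..x} F"
proof -
  have "integral {0..x} (\<lambda>t. F x) \<le> integral {0..x} F"
    by (intro integral_le integrable_const_ivl antimono_integrable_on assms(1))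
      (auto intro!: antimonoD[OF assms(1)])
  with assms(2) show ?thesis by simp
qed

lemma lower_riemann_sum_le_integral_antimono:
  fixes F :: "real \<Rightarrow> real"
  assumes anti: "antimono F" and "h > 0"
  shows "(\<Sum>i=1..N. h * F (real i * h)) \<le> integral {0..real N * h} F"
proof (induction N)
  case 0
  then show ?case by simp
next
  case (Suc N)
  let ?a = "real N * h" and ?b = "real (Suc N) * h"
  have ab: "0 \<le> ?a" "?a \<le> ?b"
    using \<open>h > 0\<close> by (simp_all add: algebra_simps)
  have "h * F ?b = integral {?a..?b} (\<lambda>t. F ?b)"
    using \<open>h > 0\<close> by (simp add: algebra_simps)
  also have "\<dots> \<le> integral {?a..?b} F"
    by (intro integral_le integrable_const_ivl antimono_integrable_on anti)
      (auto intro!: antimonoD[OF anti])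
  finally have "(\<Sum>i=1..Suc N. h * F (real i * h)) \<le> integral {0..?a} F + integral {?a..?b} F"
    using Suc.IH by (simp del: of_nat_Suc)
  also have "\<dots> = integral {0..?b} F"
    using Henstock_Kurzweil_Integration.integral_combine[OF ab antimono_integrable_on[OF anti]] .
  finally show ?case .
qed

lemma exists_dyadic_scale:
  fixes y T :: real
  assumes "T > 0" and "T \<le> y"
  obtains J :: nat where "T \<le> y / 2^J" and "y / 2^J < 2 * T"
proof
  define r where "r = log 2 (y / T)"
  define J where "J = nat \<lfloor>r\<rfloor>"
  have r: "2 powr r = y / T" "0 \<le> r"
    using assms by (simp_all add: r_def)
  have J: "real J \<le> r" "r < real (Suc J)"
    using r(2) unfolding J_def by linarith+
  have "(2::real) ^ J = 2 powr real J"
    by (simp add: powr_realpow)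
  also have "\<dots> \<le> 2 powr r"
    using J(1) by (intro powr_mono) auto
  finally show "T \<le> y / 2^J"
    using assms r(1) by (simp add: field_simps)
  have "y / T < 2 powr real (Suc J)"
    using J(2) r(1) powr_less_mono[of r "real (Suc J)" 2] by simp
  also have "\<dots> = 2 ^ Suc J"
    by (rule powr_realpow) simp
  finally show "y / 2^J < 2 * T"
    using assms by (simp add: field_simps)
qed

lemma doubling_iterate_le:
  fixes F :: "real \<Rightarrow> real"
  assumes doubling: "\<And>t. T \<le> t \<Longrightarrow> F (t/2) \<le> 3 * F t"
    and "T > 0" and "T \<le> y / 2^J" and "i \<le> J"
  shows "F (y / 2^i) \<le> 3^i * F y"
  using \<open>i \<le> J\<close>
proof (induction i)
  case 0
  then show ?case by simp
next
  case (Suc i)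
  have "0 < y / 2^J"
    using assms(2,3) by linarith
  then have "y / 2^J \<le> y / 2^i"
    using Suc.prems by (intro divide_left_mono) (auto intro: power_increasing simp: zero_less_divide_iff)
  then have "T \<le> y / 2^i"
    using assms(3) by linarith
  then have "F (y / 2^Suc i) \<le> 3 * F (y / 2^i)"
    using doubling[of "y / 2^i"] by (simp add: mult.commute)
  also have "\<dots> \<le> 3 * (3^i * F y)"
    using Suc by simp
  finally show ?case by simp
qed

lemma dyadic_moment_sum_le:
  fixes F :: "real \<Rightarrow> real"
  assumes anti: "antimono F" and nonneg: "\<And>t. 0 \<le> F t"
    and "T > 0" and pos: "F (2 * T) > 0"
    and doubling: "\<And>t. T \<le> t \<Longrightarrow> F (t/2) \<le> 3 * F t" and "T \<le> y"
  obtains J where "(\<Sum>j<J. (y/2^j)\<^sup>2 * F (y / 2^Suc j)) + (y/2^J)\<^sup>2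
    \<le> (12 + 4 / F (2 * T)) * (y\<^sup>2 * F y)"
proof -
  obtain J :: nat where J: "T \<le> y / 2^J" "y / 2^J < 2 * T"
    using exists_dyadic_scale \<open>T > 0\<close> \<open>T \<le> y\<close> by blast
  have iterate: "F (y / 2^i) \<le> 3^i * F y" if "i \<le> J" for i
    by (rule doubling_iterate_le[where T = T and J = J]) (use doubling \<open>T > 0\<close> J(1) that in auto)
  have four_pow: "(4::real)^j = (2^j)\<^sup>2" for j :: nat
    by (simp add: power2_eq_square flip: power_mult_distrib)
  have square: "(y / 2^j)\<^sup>2 = y\<^sup>2 / 4^j" for j :: nat
    by (simp add: power_divide four_pow)
  have "(\<Sum>j<J. (y/2^j)\<^sup>2 * F (y / 2^Suc j)) \<le> (\<Sum>j<J. y\<^sup>2 / 4^j * (3^Suc j * F y))"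
    unfolding square by (intro sum_mono mult_left_mono iterate) auto
  also have "\<dots> = 3 * (y\<^sup>2 * F y) * (\<Sum>j<J. (3/4)^j)"
    by (simp add: sum_distrib_left power_divide field_simps)
  also have "\<dots> \<le> 3 * (y\<^sup>2 * F y) * 4"
    using nonneg by (intro mult_left_mono) (auto simp: sum_gp_strict)
  finally have main: "(\<Sum>j<J. (y/2^j)\<^sup>2 * F (y / 2^Suc j)) \<le> 12 * (y\<^sup>2 * F y)"
    by simp
  have "F (2 * T) \<le> 3^J * F y"
    using antimonoD[OF anti, of "y / 2^J" "2 * T"] J(2) iterate[of J] by simp
  also have "\<dots> \<le> 4^J * F y"
    using nonneg by (intro mult_right_mono power_mono) auto
  finally have "(y/2^J)\<^sup>2 * F (2 * T) \<le> (2 * T)\<^sup>2 * (4^J * F y)"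
    using J \<open>T > 0\<close> pos by (intro mult_mono power_mono) auto
  also have "\<dots> = 4 * (T * 2^J)\<^sup>2 * F y"
    by (simp add: four_pow power_mult_distrib)
  also have "\<dots> \<le> 4 * y\<^sup>2 * F y"
    using J(1) \<open>T > 0\<close> nonneg by (intro mult_right_mono mult_left_mono power_mono) (auto simp: field_simps)
  finally have rest: "(y/2^J)\<^sup>2 \<le> 4 / F (2 * T) * (y\<^sup>2 * F y)"
    using pos by (simp add: field_simps)
  have "(\<Sum>j<J. (y/2^j)\<^sup>2 * F (y / 2^Suc j)) + (y/2^J)\<^sup>2 \<le> (12 + 4 / F (2 * T)) * (y\<^sup>2 * F y)"
    using main rest by (simp add: algebra_simps)
  then show thesis by (rule that)
qed

lemma filterlim_at_top_of_liminf_ratio_pos: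
  fixes F :: "real \<Rightarrow> real" and x :: "nat \<Rightarrow> real"
  assumes anti: "antimono F" and pos: "\<And>t. 0 < F t" and x_pos: "\<And>n. 1 \<le> n \<Longrightarrow> 0 < x n"
    and liminf: "0 < liminf (\<lambda>n. ereal (x n / (real n * integral {0..x n} F)))"
  shows "filterlim x at_top sequentially"
  unfolding filterlim_at_top
proof
  fix Z :: real
  obtain c where c: "0 < c" "ereal c < liminf (\<lambda>n. ereal (x n / (real n * integral {0..x n} F)))"
    using ereal_dense2[OF liminf] by auto
  have "\<forall>\<^sub>F n in sequentially. ereal c < ereal (x n / (real n * integral {0..x n} F))"
    using c(2) by (rule less_LiminfD)
  moreover have "\<forall>\<^sub>F n in sequentially. 1 / (c * F Z) < real n"
    using filterlim_real_sequentially by (simp add: filterlim_at_top_dense)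
  moreover have "\<forall>\<^sub>F n in sequentially. 1 \<le> n"
    by (rule eventually_ge_at_top)
  ultimately show "\<forall>\<^sub>F n in sequentially. Z \<le> x n"
  proof eventually_elim
    case (elim n)
    show ?case
    proof (rule ccontr)
      assume "\<not> Z \<le> x n"
      have xn: "0 < x n"
        using x_pos elim(3) .
      have "x n * F Z \<le> x n * F (x n)"
        using \<open>\<not> Z \<le> x n\<close> xn by (intro mult_left_mono antimonoD[OF anti]) auto
      also have "\<dots> \<le> integral {0..x n} F"
        using mult_le_integral_antimono[OF anti] xn by simp
      finally have integral_ge: "x n * F Z \<le> integral {0..x n} F" .
      have "0 < integral {0..x n} F"
        using integral_ge xn pos[of Z] by (meson mult_pos_pos order_less_le_trans)
      have "c < x n / (real n * integral {0..x n} F)"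
        using elim(1) by simp
      also have "\<dots> \<le> x n / (real n * (x n * F Z))"
        using integral_ge xn pos[of Z] elim(3) \<open>0 < integral {0..x n} F\<close>
        by (intro divide_left_mono mult_left_mono mult_pos_pos) auto
      also have "\<dots> = 1 / (real n * F Z)"
        using xn by simp
      finally have "c * (real n * F Z) < 1"
        using elim(3) pos[of Z] by (simp add: field_simps)
      moreover have "1 < c * (real n * F Z)"
        using elim(2) c(1) pos[of Z] by (simp add: field_simps)
      ultimately show False by simp
    qed
  qed
qed

lemma slowly_varyingD:
  assumes "slowly_varying l" and "0 < lam"
  shows "((\<lambda>x. l (lam * x) / l x) \<longlongrightarrow> 1) at_top"
  using assms unfolding slowly_varying_def by blast

lemma slowly_varying_eventually_nonzero:
  assumes "slowly_varying l"
  shows "\<forall>\<^sub>F x in at_top. l x \<noteq> 0"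
proof -
  have "\<forall>\<^sub>F x in at_top. 0 < l (1 * x) / l x"
    using slowly_varyingD[OF assms zero_less_one] by (rule order_tendstoD) simp
  then show ?thesis
    by eventually_elim auto
qed

lemma eventually_doubling_of_slowly_varying:
  fixes F l :: "real \<Rightarrow> real"
  assumes sv: "slowly_varying l" and F: "\<forall>\<^sub>F t in at_top. F t = l t / t"
    and nonneg: "\<And>t. 0 \<le> F t"
  shows "\<forall>\<^sub>F t in at_top. 0 < F t \<and> F (t/2) \<le> 3 * F t"
proof -
  have "((\<lambda>t. l ((1/2) * t) / l t) \<longlongrightarrow> 1) at_top"
    by (rule slowly_varyingD[OF sv]) simp
  then have "\<forall>\<^sub>F t in at_top. l ((1/2) * t) / l t < 3/2"
    by (rule order_tendstoD) simp
  then have "\<forall>\<^sub>F t in at_top. F t = l t / t \<and> l t \<noteq> 0 \<and> l ((1/2) * t) / l t < 3/2 \<and> 0 < t"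
    using F slowly_varying_eventually_nonzero[OF sv] eventually_gt_at_top[of 0]
    by (intro eventually_conj) auto
  then obtain N where N: "\<And>t. N \<le> t \<Longrightarrow> F t = l t / t \<and> l t \<noteq> 0 \<and> l ((1/2) * t) / l t < 3/2 \<and> 0 < t"
    unfolding eventually_at_top_linorder by blast
  show ?thesis
    unfolding eventually_at_top_linorder
  proof (intro exI allI impI)
    fix t assume "max N (2 * N) \<le> t"
    then have t: "F t = l t / t" "l t \<noteq> 0" "l ((1/2) * t) / l t < 3/2" "0 < t"
      and half: "F (t/2) = l (t/2) / (t/2)"
      using N[of t] N[of "t/2"] by auto
    have "0 < l t"
      using t nonneg[of t] by (simp add: zero_le_divide_iff order_le_neq_trans)
    then have "0 < F t"
      using t by simp
    moreover have "t * F (t/2) \<le> t * (3 * F t)"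
      using half t \<open>0 < l t\<close> by (simp add: field_simps)
    then have "F (t/2) \<le> 3 * F t"
      using t(4) by simp
    ultimately show "0 < F t \<and> F (t/2) \<le> 3 * F t" ..
  qed
qed

section \<open>Truncated moments\<close>

text \<open>\<open>trunc y z\<close> is \<open>z \<cdot> 1{z < y}\<close>; the extra cut at \<open>0\<close> makes it bounded and is harmless
  because the variables it is applied to are almost surely nonnegative.\<close>

definition trunc :: "real \<Rightarrow> real \<Rightarrow> real" where
  "trunc y z = (if 0 \<le> z \<and> z < y then z else 0)"

lemma trunc_measurable [measurable]: "trunc y \<in> borel_measurable borel"
  unfolding trunc_def by measurable

lemma abs_trunc_le: "\<bar>trunc y z\<bar> \<le> \<bar>y\<bar>"
  by (simp add: trunc_def)

lemma le_riemann_step_sum: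
  fixes h z :: real
  assumes "0 < h" and "0 \<le> z" and "z < real N * h"
  shows "z \<le> h + (\<Sum>i=1..N. h * indicator {real i * h..} z)"
  using \<open>z < real N * h\<close>
proof (induction N)
  case 0
  then show ?case using assms by simp
next
  case (Suc N)
  have last: "0 \<le> h * indicator {real (Suc N) * h..} z"
    using assms by simp
  have split: "(\<Sum>i=1..Suc N. h * indicator {real i * h..} z)
      = (\<Sum>i=1..N. h * indicator {real i * h..} z) + h * indicator {real (Suc N) * h..} z"
    by simp
  show ?case
  proof (cases "z < real N * h")
    case True
    then show ?thesis using Suc.IH last split by linarith
  next
    case False
    have "real i * h \<le> z" if "i \<in> {1..N}" for i
    proof -
      have "real i * h \<le> real N * h"
        using that \<open>0 < h\<close> by (intro mult_right_mono) auto
      then show ?thesis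
        using False by linarith
    qed
    then have "(\<Sum>i=1..N. h * indicator {real i * h..} z) = real N * h"
      by (simp add: sum.cong[of _ _ _ "\<lambda>_. h"])
    moreover have "real (Suc N) * h = real N * h + h"
      by (simp add: algebra_simps)
    ultimately show ?thesis
      using Suc.prems last split by linarith
  qed
qed

lemma trunc_le_riemann_step_sum:
  assumes "0 < h" and "0 \<le> z"
  shows "trunc (real N * h) z \<le> h + (\<Sum>i=1..N. h * indicator {real i * h..} z)"
proof -
  have "0 \<le> (\<Sum>i=1..N. h * indicator {real i * h..} z)"
    using assms by (intro sum_nonneg) auto
  then show ?thesis
    using le_riemann_step_sum[OF assms] assms by (auto simp: trunc_def)
qed

lemma trunc_square_le_dyadic_step_sum:
  assumes "0 \<le> z"
  shows "(trunc y z)\<^sup>2 \<le> (\<Sum>j<J. (y/2^j)\<^sup>2 * indicator {y / 2^Suc j..} z) + (y/2^J)\<^sup>2"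
proof (induction J)
  case 0
  show ?case
    using assms by (auto simp: trunc_def intro: power_mono)
next
  case (Suc J)
  show ?case
  proof (cases "y / 2^Suc J \<le> z")
    case True
    then have "(\<Sum>j<Suc J. (y/2^j)\<^sup>2 * indicator {y / 2^Suc j..} z)
        = (\<Sum>j<J. (y/2^j)\<^sup>2 * indicator {y / 2^Suc j..} z) + (y/2^J)\<^sup>2"
      by simp
    then show ?thesis
      using Suc.IH zero_le_power2[of "y / 2^Suc J"] by linarith
  next
    case False
    have "(trunc y z)\<^sup>2 \<le> z\<^sup>2"
      by (simp add: trunc_def)
    also have "\<dots> \<le> (y / 2^Suc J)\<^sup>2"
      using False assms by (intro power_mono) auto
    also have "\<dots> \<le> (\<Sum>j<Suc J. (y/2^j)\<^sup>2 * indicator {y / 2^Suc j..} z) + (y / 2^Suc J)\<^sup>2"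
      by (simp add: sum_nonneg)
    finally show ?thesis .
  qed
qed

lemma (in prob_space) expectation_indicator_atLeast:
  fixes X :: "'a \<Rightarrow> real"
  assumes [measurable]: "X \<in> borel_measurable M"
  shows "expectation (\<lambda>\<omega>. indicator {t..} (X \<omega>) :: real) = prob {\<omega>\<in>space M. t \<le> X \<omega>}"
proof -
  have "expectation (\<lambda>\<omega>. indicator {t..} (X \<omega>) :: real) = expectation (indicator {\<omega>\<in>space M. t \<le> X \<omega>})"
    by (intro Bochner_Integration.integral_cong) (auto simp: indicator_def)
  then show ?thesis
    by simp
qed

lemma (in prob_space) expectation_le_step_majorant:
  fixes X :: "'a \<Rightarrow> real" and f :: "real \<Rightarrow> real"
  assumes [measurable]: "X \<in> borel_measurable M" "f \<in> borel_measurable borel"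
    and nonneg: "AE \<omega> in M. 0 \<le> X \<omega>" and "finite I" and bounded: "\<And>z. \<bar>f z\<bar> \<le> B"
    and majorant: "\<And>z. 0 \<le> z \<Longrightarrow> f z \<le> c + (\<Sum>i\<in>I. h i * indicator {t i..} z)"
  shows "expectation (\<lambda>\<omega>. f (X \<omega>)) \<le> c + (\<Sum>i\<in>I. h i * prob {\<omega>\<in>space M. t i \<le> X \<omega>})"
proof -
  have indicator_integrable: "integrable M (\<lambda>\<omega>. h i * indicator {t i..} (X \<omega>) :: real)" for i
    by (intro integrable_mult_right integrable_const_bound[where B = 1]) auto
  have "expectation (\<lambda>\<omega>. f (X \<omega>)) \<le> expectation (\<lambda>\<omega>. c + (\<Sum>i\<in>I. h i * indicator {t i..} (X \<omega>)))"
  proof (rule integral_mono_AE)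
    show "integrable M (\<lambda>\<omega>. f (X \<omega>))"
      using bounded by (intro integrable_const_bound[where B = B]) auto
    show "integrable M (\<lambda>\<omega>. c + (\<Sum>i\<in>I. h i * indicator {t i..} (X \<omega>)))"
      using indicator_integrable by auto
    show "AE \<omega> in M. f (X \<omega>) \<le> c + (\<Sum>i\<in>I. h i * indicator {t i..} (X \<omega>))"
      using nonneg by eventually_elim (rule majorant)
  qed
  also have "\<dots> = c + (\<Sum>i\<in>I. h i * prob {\<omega>\<in>space M. t i \<le> X \<omega>})"
    using indicator_integrable
    by (simp add: Bochner_Integration.integral_add Bochner_Integration.integral_sum prob_space
        expectation_indicator_atLeast)
  finally show ?thesis .
qed

lemma (in prob_space) expectation_trunc_le_integral_tail:
  fixes X :: "'a \<Rightarrow> real"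
  assumes [measurable]: "X \<in> borel_measurable M" and nonneg: "AE \<omega> in M. 0 \<le> X \<omega>" and "0 < y"
  shows "expectation (\<lambda>\<omega>. trunc y (X \<omega>)) \<le> integral {0..y} (\<lambda>t. prob {\<omega>\<in>space M. t \<le> X \<omega>})"
    (is "?E \<le> integral {0..y} ?F")
proof (rule LIMSEQ_le_const)
  have "antimono ?F"
    by (intro antimonoI finite_measure_mono) auto
  have "?E \<le> integral {0..y} ?F + y / real N" if "1 \<le> N" for N
  proof -
    define h where "h = y / real N"
    have h: "0 < h" "real N * h = y"
      using that \<open>0 < y\<close> by (simp_all add: h_def)
    have "?E \<le> h + (\<Sum>i=1..N. h * ?F (real i * h))"
    proof (rule expectation_le_step_majorant[OF _ _ nonneg, where B = y])
      show "\<bar>trunc y z\<bar> \<le> y" for z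
        using abs_trunc_le[of y z] \<open>0 < y\<close> by simp
      show "trunc y z \<le> h + (\<Sum>i=1..N. h * indicator {real i * h..} z)" if "0 \<le> z" for z
        using trunc_le_riemann_step_sum[OF h(1) that, of N] h(2) by simp
    qed auto
    also have "\<dots> \<le> h + integral {0..y} ?F"
      using lower_riemann_sum_le_integral_antimono[OF \<open>antimono ?F\<close> h(1), of N] h(2) by simp
    finally show ?thesis
      by (simp add: h_def)
  qed
  then show "\<exists>N. \<forall>n\<ge>N. ?E \<le> integral {0..y} ?F + y / real n"
    by blast
  show "(\<lambda>n. integral {0..y} ?F + y / real n) \<longlonglongrightarrow> integral {0..y} ?F"
    using tendsto_add[OF tendsto_const lim_const_over_n[of y]] by simp
qed

lemma (in prob_space) expectation_trunc_square_le_dyadic_sum: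
  fixes X :: "'a \<Rightarrow> real"
  assumes [measurable]: "X \<in> borel_measurable M" and nonneg: "AE \<omega> in M. 0 \<le> X \<omega>"
  shows "expectation (\<lambda>\<omega>. (trunc y (X \<omega>))\<^sup>2)
    \<le> (y/2^J)\<^sup>2 + (\<Sum>j<J. (y/2^j)\<^sup>2 * prob {\<omega>\<in>space M. y / 2^Suc j \<le> X \<omega>})"
proof (rule expectation_le_step_majorant[OF _ _ nonneg, where B = "y\<^sup>2"])
  show "\<bar>(trunc y z)\<^sup>2\<bar> \<le> y\<^sup>2" for z
    using abs_trunc_le[of y z] by (simp add: abs_le_square_iff)
  show "(trunc y z)\<^sup>2 \<le> (y/2^J)\<^sup>2 + (\<Sum>j<J. (y/2^j)\<^sup>2 * indicator {y / 2^Suc j..} z)" if "0 \<le> z" for z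
    using trunc_square_le_dyadic_step_sum[OF that, of y J] by simp
qed auto

section \<open>Partial sums of i.i.d.\ nonnegative variables\<close>

lemma (in prob_space)
  fixes Y :: "'i \<Rightarrow> 'a \<Rightarrow> real"
  assumes "finite I" and indep: "indep_vars (\<lambda>_. borel) Y I"
    and integrable: "\<And>i. i \<in> I \<Longrightarrow> integrable M (Y i)"
    and square_integrable: "\<And>i. i \<in> I \<Longrightarrow> integrable M (\<lambda>\<omega>. (Y i \<omega>)\<^sup>2)"
    and centered: "\<And>i. i \<in> I \<Longrightarrow> expectation (Y i) = 0"
  shows integrable_square_sum_indep: "integrable M (\<lambda>\<omega>. (\<Sum>i\<in>I. Y i \<omega>)\<^sup>2)"
    and expectation_square_sum_indep:
      "expectation (\<lambda>\<omega>. (\<Sum>i\<in>I. Y i \<omega>)\<^sup>2) = (\<Sum>i\<in>I. expectation (\<lambda>\<omega>. (Y i \<omega>)\<^sup>2))"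
proof -
  have product: "integrable M (\<lambda>\<omega>. Y i \<omega> * Y j \<omega>) \<and>
      expectation (\<lambda>\<omega>. Y i \<omega> * Y j \<omega>) = (if i = j then expectation (\<lambda>\<omega>. (Y i \<omega>)\<^sup>2) else 0)"
    if "i \<in> I" "j \<in> I" for i j
  proof (cases "i = j")
    case True
    then show ?thesis
      using square_integrable that by (simp add: power2_eq_square)
  next
    case False
    have "indep_vars (\<lambda>_. borel) Y {i, j}"
      using indep by (rule indep_vars_subset) (use that in auto)
    then have "integrable M (\<lambda>\<omega>. \<Prod>l\<in>{i, j}. Y l \<omega>)"
      and "expectation (\<lambda>\<omega>. \<Prod>l\<in>{i, j}. Y l \<omega>) = (\<Prod>l\<in>{i, j}. expectation (Y l))"
      using integrable that by (auto intro: indep_vars_integrable indep_vars_lebesgue_integral)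
    then show ?thesis
      using False centered that by simp
  qed
  have square: "(\<Sum>i\<in>I. Y i \<omega>)\<^sup>2 = (\<Sum>i\<in>I. \<Sum>j\<in>I. Y i \<omega> * Y j \<omega>)" for \<omega>
    by (simp add: power2_eq_square sum_product)
  show "integrable M (\<lambda>\<omega>. (\<Sum>i\<in>I. Y i \<omega>)\<^sup>2)"
    unfolding square using product by auto
  have "expectation (\<lambda>\<omega>. (\<Sum>i\<in>I. Y i \<omega>)\<^sup>2) = (\<Sum>i\<in>I. \<Sum>j\<in>I. expectation (\<lambda>\<omega>. Y i \<omega> * Y j \<omega>))"
    unfolding square using product by (simp add: Bochner_Integration.integral_sum)
  also have "\<dots> = (\<Sum>i\<in>I. expectation (\<lambda>\<omega>. (Y i \<omega>)\<^sup>2))"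
    using product \<open>finite I\<close> by (simp cong: sum.cong)
  finally show "expectation (\<lambda>\<omega>. (\<Sum>i\<in>I. Y i \<omega>)\<^sup>2) = (\<Sum>i\<in>I. expectation (\<lambda>\<omega>. (Y i \<omega>)\<^sup>2))" .
qed

locale nonneg_iid = prob_space +
  fixes \<xi> :: "nat \<Rightarrow> 'a \<Rightarrow> real"
  assumes measurable_\<xi> [measurable]: "\<And>i. \<xi> i \<in> borel_measurable M"
    and indep_\<xi>: "indep_vars (\<lambda>_. borel) \<xi> UNIV"
    and distr_\<xi>: "\<And>i. distr M borel (\<xi> i) = distr M borel (\<xi> 0)"
    and nonneg_\<xi>: "\<And>i. AE \<omega> in M. 0 \<le> \<xi> i \<omega>"
begin

definition tail :: "real \<Rightarrow> real" where
  "tail t = prob {\<omega>\<in>space M. t \<le> \<xi> 0 \<omega>}"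

lemma tail_nonneg: "0 \<le> tail t"
  by (simp add: tail_def)

lemma antimono_tail: "antimono tail"
  unfolding tail_def by (intro antimonoI finite_measure_mono) auto

lemma expectation_comp_\<xi>:
  fixes g :: "real \<Rightarrow> real"
  assumes "g \<in> borel_measurable borel"
  shows "expectation (\<lambda>\<omega>. g (\<xi> i \<omega>)) = expectation (\<lambda>\<omega>. g (\<xi> 0 \<omega>))"
  using integral_distr[OF measurable_\<xi> assms, symmetric] by (simp add: distr_\<xi>[of i])

lemma prob_\<xi>_ge: "prob {\<omega>\<in>space M. t \<le> \<xi> i \<omega>} = tail t"
  using expectation_comp_\<xi>[of "indicator {t..}" i] expectation_indicator_atLeast[of "\<xi> i" t]
    expectation_indicator_atLeast[of "\<xi> 0" t]
  by (simp add: tail_def)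

lemma integrable_trunc_\<xi>: "integrable M (\<lambda>\<omega>. trunc y (\<xi> i \<omega>))"
  using abs_trunc_le by (intro integrable_const_bound[where B = "\<bar>y\<bar>"]) auto

lemma integrable_trunc_\<xi>_square: "integrable M (\<lambda>\<omega>. (trunc y (\<xi> i \<omega>))\<^sup>2)"
  using abs_trunc_le by (intro integrable_const_bound[where B = "y\<^sup>2"]) (auto simp: abs_le_square_iff)

lemma prob_truncated_sum_deviation_le:
  fixes y b :: real
  assumes "0 < b"
  defines "m \<equiv> expectation (\<lambda>\<omega>. trunc y (\<xi> 0 \<omega>))"
  shows "prob {\<omega>\<in>space M. b \<le> \<bar>\<Sum>i<k. trunc y (\<xi> i \<omega>) - m\<bar>}
    \<le> real k * expectation (\<lambda>\<omega>. (trunc y (\<xi> 0 \<omega>))\<^sup>2) / b\<^sup>2"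
proof -
  define Y where "Y i \<omega> = trunc y (\<xi> i \<omega>) - m" for i \<omega>
  have [measurable]: "Y i \<in> borel_measurable M" for i
    unfolding Y_def by measurable
  have integrable: "integrable M (Y i)" for i
    unfolding Y_def using integrable_trunc_\<xi> by auto
  have square_integrable: "integrable M (\<lambda>\<omega>. (Y i \<omega>)\<^sup>2)" for i
    unfolding Y_def power2_diff using integrable_trunc_\<xi> integrable_trunc_\<xi>_square by auto
  have centered: "expectation (Y i) = 0" for i
    unfolding Y_def using expectation_comp_\<xi>[of "\<lambda>z. trunc y z - m" i] integrable_trunc_\<xi>[of y 0]
    by (simp add: m_def prob_space)
  have "expectation (\<lambda>\<omega>. (Y i \<omega>)\<^sup>2) = variance (\<lambda>\<omega>. trunc y (\<xi> 0 \<omega>))" for i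
    using expectation_comp_\<xi>[of "\<lambda>z. (trunc y z - m)\<^sup>2" i] by (simp add: Y_def m_def)
  also have "\<dots> \<le> expectation (\<lambda>\<omega>. (trunc y (\<xi> 0 \<omega>))\<^sup>2)"
    using integrable_trunc_\<xi> integrable_trunc_\<xi>_square by (simp add: variance_eq)
  finally have second_moment:
    "expectation (\<lambda>\<omega>. (Y i \<omega>)\<^sup>2) \<le> expectation (\<lambda>\<omega>. (trunc y (\<xi> 0 \<omega>))\<^sup>2)" for i .
  have "indep_vars (\<lambda>_. borel) Y UNIV"
    unfolding Y_def by (rule indep_vars_compose2[OF indep_\<xi>]) simp
  then have indep: "indep_vars (\<lambda>_. borel) Y {..<k}"
    by (rule indep_vars_subset) simp
  have sum_centered: "expectation (\<lambda>\<omega>. \<Sum>i<k. Y i \<omega>) = 0"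
    using integrable centered by (simp add: Bochner_Integration.integral_sum)
  have "prob {\<omega>\<in>space M. b \<le> \<bar>(\<Sum>i<k. Y i \<omega>) - expectation (\<lambda>\<omega>. \<Sum>i<k. Y i \<omega>)\<bar>}
      \<le> variance (\<lambda>\<omega>. \<Sum>i<k. Y i \<omega>) / b\<^sup>2"
    using integrable_square_sum_indep[OF _ indep integrable square_integrable centered] \<open>0 < b\<close>
    by (intro Chebyshev_inequality) auto
  also have "variance (\<lambda>\<omega>. \<Sum>i<k. Y i \<omega>) = (\<Sum>i<k. expectation (\<lambda>\<omega>. (Y i \<omega>)\<^sup>2))"
    using expectation_square_sum_indep[OF _ indep integrable square_integrable centered] sum_centered
    by simp
  also have "\<dots> \<le> real k * expectation (\<lambda>\<omega>. (trunc y (\<xi> 0 \<omega>))\<^sup>2)"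
    using sum_bounded_above[where A = "{..<k}", OF second_moment] by simp
  finally show ?thesis
    using \<open>0 < b\<close> sum_centered by (simp add: Y_def sum_subtractf divide_right_mono)
qed

lemma prob_partial_sum_ge_le:
  assumes "0 < b" and mean: "expectation (\<lambda>\<omega>. trunc y (\<xi> 0 \<omega>)) \<le> g"
  shows "prob {\<omega>\<in>space M. b \<le> (\<Sum>i<k. \<xi> i \<omega>) - real k * g}
    \<le> real k * tail y + real k * expectation (\<lambda>\<omega>. (trunc y (\<xi> 0 \<omega>))\<^sup>2) / b\<^sup>2"
proof -
  let ?m = "expectation (\<lambda>\<omega>. trunc y (\<xi> 0 \<omega>))"
  define large where "large = (\<Union>i<k. {\<omega>\<in>space M. y \<le> \<xi> i \<omega>})"
  define deviation where "deviation = {\<omega>\<in>space M. b \<le> \<bar>\<Sum>i<k. trunc y (\<xi> i \<omega>) - ?m\<bar>}"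
  have [measurable]: "large \<in> events" "deviation \<in> events"
    unfolding large_def deviation_def by measurable
  have "AE \<omega> in M. \<forall>i. 0 \<le> \<xi> i \<omega>"
    using nonneg_\<xi> by (simp add: AE_all_countable)
  then have "AE \<omega> in M. \<omega> \<in> {\<omega>\<in>space M. b \<le> (\<Sum>i<k. \<xi> i \<omega>) - real k * g}
      \<longrightarrow> \<omega> \<in> large \<union> deviation"
  proof eventually_elim
    case (elim \<omega>)
    show ?case
    proof (intro impI)
      assume \<omega>: "\<omega> \<in> {\<omega>\<in>space M. b \<le> (\<Sum>i<k. \<xi> i \<omega>) - real k * g}"
      show "\<omega> \<in> large \<union> deviation"
      proof (cases "\<exists>i<k. y \<le> \<xi> i \<omega>")
        case True
        then show ?thesis
          using \<omega> by (auto simp: large_def)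
      next
        case False
        \<comment> \<open>no truncation happens, and centring at \<open>g \<ge> ?m\<close> only lowers the sum\<close>
        then have "(\<Sum>i<k. trunc y (\<xi> i \<omega>) - ?m) = (\<Sum>i<k. \<xi> i \<omega>) - real k * ?m"
          using elim by (simp add: trunc_def sum_subtractf not_le)
        moreover have "real k * ?m \<le> real k * g"
          using mean by (intro mult_left_mono) auto
        ultimately show ?thesis
          using \<omega> by (auto simp: deviation_def)
      qed
    qed
  qed
  then have "prob {\<omega>\<in>space M. b \<le> (\<Sum>i<k. \<xi> i \<omega>) - real k * g} \<le> prob (large \<union> deviation)"
    by (intro finite_measure_mono_AE) auto
  also have "\<dots> \<le> prob large + prob deviation"
    by (rule measure_Un_le) auto
  also have "prob large \<le> (\<Sum>i<k. prob {\<omega>\<in>space M. y \<le> \<xi> i \<omega>})"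
    unfolding large_def by (rule finite_measure_subadditive_finite) auto
  also have "\<dots> = real k * tail y"
    by (simp add: prob_\<xi>_ge)
  also have "prob deviation \<le> real k * expectation (\<lambda>\<omega>. (trunc y (\<xi> 0 \<omega>))\<^sup>2) / b\<^sup>2"
    unfolding deviation_def using prob_truncated_sum_deviation_le[OF \<open>0 < b\<close>] .
  finally show ?thesis
    by simp
qed

lemma Max_prob_partial_sum_deviation_le:
  assumes "0 < y" and "0 < \<beta>" and "\<beta> \<le> b" and "0 \<le> K" and "1 \<le> n"
    and moment: "expectation (\<lambda>\<omega>. (trunc y (\<xi> 0 \<omega>))\<^sup>2) \<le> K * (y\<^sup>2 * tail y)"
  shows "Max ((\<lambda>k. prob {\<omega>\<in>space M. b * y \<le> (\<Sum>i<k. \<xi> i \<omega>) - real k * integral {0..y} tail}) ` {1..n})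
    \<le> (1 + K / \<beta>\<^sup>2) * (real n * tail y)"
proof (subst Max_le_iff, safe)
  fix k assume "k \<in> {1..n}"
  then have k: "real k \<le> real n"
    by simp
  have "0 < b"
    using \<open>0 < \<beta>\<close> \<open>\<beta> \<le> b\<close> by simp
  have "expectation (\<lambda>\<omega>. trunc y (\<xi> 0 \<omega>)) \<le> integral {0..y} tail"
    using expectation_trunc_le_integral_tail[OF measurable_\<xi> nonneg_\<xi> \<open>0 < y\<close>]
    by (simp add: tail_def[abs_def])
  then have "prob {\<omega>\<in>space M. b * y \<le> (\<Sum>i<k. \<xi> i \<omega>) - real k * integral {0..y} tail}
      \<le> real k * tail y + real k * expectation (\<lambda>\<omega>. (trunc y (\<xi> 0 \<omega>))\<^sup>2) / (b * y)\<^sup>2"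
    using \<open>0 < y\<close> \<open>0 < b\<close> by (intro prob_partial_sum_ge_le) auto
  also have "\<dots> \<le> real n * tail y + real n * (K * (y\<^sup>2 * tail y)) / (b * y)\<^sup>2"
    using k moment tail_nonneg integral_nonneg_AE[of "\<lambda>\<omega>. (trunc y (\<xi> 0 \<omega>))\<^sup>2" M]
    by (intro add_mono divide_right_mono mult_mono mult_right_mono) auto
  also have "\<dots> = (1 + K / b\<^sup>2) * (real n * tail y)"
    using \<open>0 < y\<close> \<open>0 < b\<close> by (simp add: field_simps power2_eq_square)
  also have "\<dots> \<le> (1 + K / \<beta>\<^sup>2) * (real n * tail y)"
    using \<open>0 < \<beta>\<close> \<open>\<beta> \<le> b\<close> \<open>0 \<le> K\<close> tail_nonneg
    by (intro mult_right_mono add_left_mono divide_left_mono power_mono) auto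
  finally show "prob {\<omega>\<in>space M. b * y \<le> (\<Sum>i<k. \<xi> i \<omega>) - real k * integral {0..y} tail}
      \<le> (1 + K / \<beta>\<^sup>2) * (real n * tail y)" .
qed (use \<open>1 \<le> n\<close> in auto)

lemma tail_pos_of_slowly_varying:
  assumes "slowly_varying l" and "\<forall>\<^sub>F t in at_top. tail t = l t / t"
  shows "0 < tail t"
proof -
  obtain T where T: "\<And>s. T \<le> s \<Longrightarrow> 0 < tail s"
    using eventually_doubling_of_slowly_varying[OF assms tail_nonneg]
    unfolding eventually_at_top_linorder by blast
  have "tail (max T t) \<le> tail t"
    using antimonoD[OF antimono_tail] by simp
  then show ?thesis
    using T[of "max T t"] by simp
qed

lemma truncated_second_moment_le_of_slowly_varying:
  assumes "slowly_varying l" and "\<forall>\<^sub>F t in at_top. tail t = l t / t"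
  obtains K T where "0 \<le> K"
    and "\<And>y. T \<le> y \<Longrightarrow> expectation (\<lambda>\<omega>. (trunc y (\<xi> 0 \<omega>))\<^sup>2) \<le> K * (y\<^sup>2 * tail y)"
proof -
  obtain T0 where T0: "\<And>t. T0 \<le> t \<Longrightarrow> tail (t/2) \<le> 3 * tail t"
    using eventually_doubling_of_slowly_varying[OF assms tail_nonneg]
    unfolding eventually_at_top_linorder by blast
  define T where "T = max T0 1"
  have "0 < T" and doubling: "\<And>t. T \<le> t \<Longrightarrow> tail (t/2) \<le> 3 * tail t"
    using T0 by (auto simp: T_def)
  have "expectation (\<lambda>\<omega>. (trunc y (\<xi> 0 \<omega>))\<^sup>2) \<le> (12 + 4 / tail (2 * T)) * (y\<^sup>2 * tail y)"
    if "T \<le> y" for y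
  proof -
    obtain J where J: "(\<Sum>j<J. (y/2^j)\<^sup>2 * tail (y / 2^Suc j)) + (y/2^J)\<^sup>2
        \<le> (12 + 4 / tail (2 * T)) * (y\<^sup>2 * tail y)"
      using dyadic_moment_sum_le[OF antimono_tail tail_nonneg \<open>0 < T\<close>
          tail_pos_of_slowly_varying[OF assms] doubling \<open>T \<le> y\<close>] .
    have "expectation (\<lambda>\<omega>. (trunc y (\<xi> 0 \<omega>))\<^sup>2)
        \<le> (y/2^J)\<^sup>2 + (\<Sum>j<J. (y/2^j)\<^sup>2 * tail (y / 2^Suc j))"
      unfolding tail_def by (rule expectation_trunc_square_le_dyadic_sum[OF measurable_\<xi> nonneg_\<xi>])
    with J show ?thesis
      by linarith
  qed
  moreover have "0 \<le> 12 + 4 / tail (2 * T)"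
    using tail_nonneg[of "2 * T"] by simp
  ultimately show thesis
    using that by blast
qed

end

theorem corollary1:
  fixes M :: "'a measure" and \<xi> :: "nat \<Rightarrow> 'a \<Rightarrow> real"
    and x a :: "nat \<Rightarrow> real"
    and Fbar G :: "real \<Rightarrow> real" and S :: "nat \<Rightarrow> 'a \<Rightarrow> real"
  assumes "prob_space M"
    and rv: "\<And>i. \<xi> i \<in> borel_measurable M"
    and indep: "prob_space.indep_vars M (\<lambda>_. borel) \<xi> UNIV"
    and ident: "\<And>i. distr M borel (\<xi> i) = distr M borel (\<xi> 0)"
    and nonneg: "\<And>i. AE \<omega> in M. \<xi> i \<omega> \<ge> 0"
    and Fbar_def: "\<And>t. Fbar t = measure M {\<omega> \<in> space M. \<xi> 0 \<omega> \<ge> t}"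
    and tail: "\<exists>l. slowly_varying l \<and> (\<forall>\<^sub>F t in at_top. Fbar t = l t / t)"
    and G_def: "\<And>t. G t = integral {0..t} Fbar"
    and S_def: "\<And>k \<omega>. S k \<omega> = (\<Sum>i<k. \<xi> i \<omega>)"
    and x_pos: "\<And>n. n \<ge> 1 \<Longrightarrow> x n > 0"
    and x_liminf: "liminf (\<lambda>n. ereal (x n / (real n * G (x n)))) > 0"
    and a_pos: "\<And>n. n \<ge> 1 \<Longrightarrow> a n > 0"
    and a_lim: "\<exists>L>0. a \<longlonglongrightarrow> L"
  shows "(\<lambda>n. Max ((\<lambda>k. measure M {\<omega> \<in> space M. S k \<omega> - real k * G (x n) \<ge> a n * x n}) ` {1..n}))
           \<in> O(\<lambda>n. real n * Fbar (x n))"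
proof -
  interpret nonneg_iid M \<xi>
    using assms(1) rv indep ident nonneg by (simp add: nonneg_iid_def nonneg_iid_axioms_def)
  have Fbar: "Fbar = tail"
    by (simp add: fun_eq_iff Fbar_def tail_def)
  have G: "G = (\<lambda>t. integral {0..t} tail)"
    by (simp add: fun_eq_iff G_def Fbar)
  obtain l where l: "slowly_varying l" "\<forall>\<^sub>F t in at_top. tail t = l t / t"
    using tail by (auto simp: Fbar)
  obtain K T where "0 \<le> K"
    and moment: "\<And>y. T \<le> y \<Longrightarrow> expectation (\<lambda>\<omega>. (trunc y (\<xi> 0 \<omega>))\<^sup>2) \<le> K * (y\<^sup>2 * tail y)"
    using truncated_second_moment_le_of_slowly_varying[OF l] by blast
  have "filterlim x at_top sequentially"
    using filterlim_at_top_of_liminf_ratio_pos[OF antimono_tail tail_pos_of_slowly_varying[OF l] x_pos]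
      x_liminf by (simp add: G)
  then have "\<forall>\<^sub>F n in sequentially. T \<le> x n"
    by (simp add: filterlim_at_top)
  moreover obtain L where "0 < L" and "a \<longlonglongrightarrow> L"
    using a_lim by blast
  then have "\<forall>\<^sub>F n in sequentially. L / 2 < a n"
    by (intro order_tendstoD) auto
  ultimately have "\<forall>\<^sub>F n in sequentially.
      norm (Max ((\<lambda>k. measure M {\<omega> \<in> space M. S k \<omega> - real k * G (x n) \<ge> a n * x n}) ` {1..n}))
        \<le> (1 + K / (L / 2)\<^sup>2) * norm (real n * Fbar (x n))"
    using eventually_ge_at_top[of 1]
  proof eventually_elim
    case (elim n)
    have "0 \<le> Max ((\<lambda>k. measure M {\<omega> \<in> space M. S k \<omega> - real k * G (x n) \<ge> a n * x n}) ` {1..n})"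
      using elim(3) by (subst Max_ge_iff) auto
    with Max_prob_partial_sum_deviation_le[OF x_pos _ _ \<open>0 \<le> K\<close> elim(3) moment[OF elim(1)], of "L / 2"]
    show ?case
      using elim \<open>0 < L\<close> by (simp add: S_def G Fbar tail_nonneg)
  qed
  then show ?thesis
    by (rule bigoI)
qed

end
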